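(* Consider the segregation process with window size $w$ on a ring network of size $n$, started from a uniformly random initial configuration. For any fixed $w$, as $n\to\infty$, the probability that the process eventually reaches a frozen configuration converges to $1$.
   Context: Segregation process: the nodes of an $n$-cycle are indexed mod $n$; at every time there is a bijection between $n$ individuals and the nodes, and each individual has a type (label) $x$ or $o$. Initially each node independently receives label $x$ or $o$ with probability $1/2$ each. With sign $+1$ for $x$ and $-1$ for $o$, the $x$-bias $\beta_t(i)$ of node $i$ at time $t$ is the sum of the signs of the labels of nodes $i-w,\dots,i+w$ (mod $n$). An individual of type $x$ at node $i$ is happy iff $\beta_t(i)>0$, one of type $o$ iff $\beta_t(i)<0$; otherwise unhappy. At each time step two individuals are chosen uniformly at random; if both are unhappy and of opposite types they exchange nodes, otherwise nothing changes. A frozen configuration is one in which no further swaps are possible (i.e. there are not both an unhappy $x$ and an unhappy $o$). *)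

theory Defs
  imports "HOL-Probability.Probability"
begin

text \<open>A configuration of the n-cycle is a list of labels of length n;
  node i (0 \<le> i < n) carries label cfg ! i, where True = type x and False = type o.
  Individuals are identified with the nodes they currently occupy (the dynamics only
  depend on the labels).\<close>

definition sgn_lab :: "bool \<Rightarrow> int" where
  "sgn_lab b = (if b then 1 else -1)"

definition xbias :: "nat \<Rightarrow> bool list \<Rightarrow> nat \<Rightarrow> int" where
  "xbias w cfg i =
     (\<Sum>d\<in>{-int w..int w}. sgn_lab (cfg ! nat ((int i + d) mod int (length cfg))))"

definition happy :: "nat \<Rightarrow> bool list \<Rightarrow> nat \<Rightarrow> bool" where
  "happy w cfg i = (if cfg ! i then xbias w cfg i > 0 else xbias w cfg i < 0)"

definition unhappy :: "nat \<Rightarrow> bool list \<Rightarrow> nat \<Rightarrow> bool" where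
  "unhappy w cfg i = (\<not> happy w cfg i)"

definition frozen :: "nat \<Rightarrow> bool list \<Rightarrow> bool" where
  "frozen w cfg = (\<not> ((\<exists>i<length cfg. cfg ! i \<and> unhappy w cfg i) \<and>
                        (\<exists>j<length cfg. \<not> cfg ! j \<and> unhappy w cfg j)))"

definition swap_nodes :: "bool list \<Rightarrow> nat \<Rightarrow> nat \<Rightarrow> bool list" where
  "swap_nodes cfg i j = cfg[i := cfg ! j, j := cfg ! i]"

text \<open>One step: a uniformly random pair of distinct individuals (equivalently, of
  distinct nodes); they exchange nodes iff both are unhappy and of opposite types.\<close>
definition step :: "nat \<Rightarrow> bool list \<Rightarrow> bool list pmf" where
  "step w cfg =
     (if length cfg < 2 then return_pmf cfg
      else map_pmf (\<lambda>(i, j). if cfg ! i \<noteq> cfg ! j \<and> unhappy w cfg i \<and> unhappy w cfg j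
                              then swap_nodes cfg i j else cfg)
             (pmf_of_set {(i, j). i < j \<and> j < length cfg}))"

definition init_cfg :: "nat \<Rightarrow> bool list pmf" where
  "init_cfg n = pmf_of_set {cfg. length cfg = n}"

primrec traj :: "nat \<Rightarrow> nat \<Rightarrow> nat \<Rightarrow> bool list list pmf" where
  "traj w n 0 = map_pmf (\<lambda>c. [c]) (init_cfg n)"
| "traj w n (Suc t) = bind_pmf (traj w n t) (\<lambda>xs. map_pmf (\<lambda>c. xs @ [c]) (step w (last xs)))"

definition reach_within :: "nat \<Rightarrow> nat \<Rightarrow> nat \<Rightarrow> real" where
  "reach_within w n t = measure_pmf.prob (traj w n t) {xs. \<exists>c\<in>set xs. frozen w c}"

text \<open>Probability that the process eventually reaches a frozen configuration
  (limit of the nondecreasing sequence reach_within w n t, t \<rightarrow> \<infinity>).\<close>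
definition reach_frozen_prob :: "nat \<Rightarrow> nat \<Rightarrow> real" where
  "reach_frozen_prob w n = (SUP t. reach_within w n t)"

end

theory Submission
  imports Defs
begin

text \<open>
  With signs \<open>s k = \<plusminus>1\<close>, take as energy the sum of \<open>s k * s (k + d)\<close> over all nodes \<open>k\<close>
  and offsets \<open>\<bar>d\<bar> \<le> w\<close>. When \<open>n \<ge> 2w+1\<close>, exchanging an unhappy \<open>x\<close> with an unhappy \<open>o\<close>
  strictly increases the energy: the window has odd size, so the two biases are nonzero
  with opposite signs, and the second-order term is nonnegative because a node occurs at
  most once in another node's window. The energy lies in \<open>[-n(2w+1), n(2w+1)]\<close>, and from a
  non-frozen configuration such an exchange is chosen with probability at least \<open>1/n\<^sup>2\<close>.
  Hence \<open>(1/2)^(energy + n(2w+1))\<close>, killed at freezing, contracts in expectation by the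
  factor \<open>1 - 1/(2n\<^sup>2)\<close> at each step, so the process freezes with probability one already
  for every \<open>n \<ge> 2w+1\<close>.
\<close>

primrec path_pmf :: "'a pmf \<Rightarrow> ('a \<Rightarrow> 'a pmf) \<Rightarrow> nat \<Rightarrow> 'a list pmf" where
  "path_pmf I K 0 = map_pmf (\<lambda>x. [x]) I"
| "path_pmf I K (Suc t) = bind_pmf (path_pmf I K t) (\<lambda>xs. map_pmf (\<lambda>y. xs @ [y]) (K (last xs)))"

lemma set_path_pmf:
  assumes "set_pmf I \<subseteq> S" and "\<And>x. x \<in> S \<Longrightarrow> set_pmf (K x) \<subseteq> S"
    and "xs \<in> set_pmf (path_pmf I K t)"
  shows "xs \<noteq> [] \<and> last xs \<in> S"
  using assms(3)
proof (induction t arbitrary: xs)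
  case 0
  then show ?case using assms(1) by auto
next
  case (Suc t)
  then show ?case using assms(2) by fastforce
qed

locale potential_drift =
  fixes I :: "'a pmf" and K :: "'a \<Rightarrow> 'a pmf" and S T :: "'a set"
    and \<phi> :: "'a \<Rightarrow> int" and M :: nat and p :: real
  assumes init_subset: "set_pmf I \<subseteq> S"
    and step_subset: "x \<in> S \<Longrightarrow> set_pmf (K x) \<subseteq> S"
    and potential_bounded: "x \<in> S \<Longrightarrow> \<bar>\<phi> x\<bar> \<le> int M"
    and potential_mono: "x \<in> S \<Longrightarrow> x \<notin> T \<Longrightarrow> y \<in> set_pmf (K x) \<Longrightarrow> \<phi> x \<le> \<phi> y"
    and increase_prob: "x \<in> S \<Longrightarrow> x \<notin> T \<Longrightarrow> p \<le> measure_pmf.prob (K x) {y. \<phi> x < \<phi> y}"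
    and p_pos: "0 < p" and p_le_1: "p \<le> 1"
begin

definition height :: "'a \<Rightarrow> nat" where
  "height x = nat (\<phi> x + int M)"

definition lyap :: "'a list \<Rightarrow> ennreal" where
  "lyap xs = (if \<forall>x\<in>set xs. x \<notin> T then ennreal ((1/2) ^ height (last xs)) else 0)"

lemma kernel_lyap_le:
  assumes x: "x \<in> S" "x \<notin> T"
  shows "(\<integral>\<^sup>+y. ennreal ((1/2) ^ height y) \<partial>K x) \<le> ennreal ((1 - p/2) * (1/2) ^ height x)"
proof -
  define v :: real where "v = (1/2) ^ height x"
  define E where "E = {y. \<phi> x < \<phi> y}"
  have v: "0 \<le> v" unfolding v_def by simp
  txt \<open>The weight never grows along a step and at least halves on \<open>E\<close>.\<close>
  have pointwise: "ennreal ((1/2) ^ height y) + ennreal (v/2) * indicator E y \<le> ennreal v"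
    if y: "y \<in> set_pmf (K x)" for y
  proof -
    have "y \<in> S" using y step_subset x by blast
    then have bounds: "\<phi> x + int M \<ge> 0" "\<phi> y + int M \<ge> 0"
      using potential_bounded x by force+
    show ?thesis
    proof (cases "y \<in> E")
      case True
      then have "height x + 1 \<le> height y" using bounds unfolding E_def height_def by auto
      then have "(1/2::real) ^ height y \<le> (1/2) ^ (height x + 1)" by (rule power_decreasing) auto
      then show ?thesis using True v by (simp add: v_def ennreal_plus[symmetric] del: ennreal_plus)
    next
      case False
      have "height x \<le> height y" using potential_mono[OF x y] unfolding height_def by auto
      then have "(1/2::real) ^ height y \<le> v" unfolding v_def by (rule power_decreasing) auto
      then show ?thesis using False by (simp add: ennreal_leI)
    qed
  qed
  let ?I = "\<integral>\<^sup>+y. ennreal ((1/2) ^ height y) \<partial>K x"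
  have "?I + ennreal (v/2) * emeasure (K x) E
      = (\<integral>\<^sup>+y. ennreal ((1/2) ^ height y) + ennreal (v/2) * indicator E y \<partial>K x)"
    by (simp add: nn_integral_add nn_integral_cmult_indicator)
  also have "\<dots> \<le> (\<integral>\<^sup>+y. ennreal v \<partial>K x)"
    by (rule nn_integral_mono_AE) (simp add: AE_measure_pmf_iff pointwise)
  also have "\<dots> = ennreal v" by (simp add: measure_pmf.emeasure_space_1)
  finally have integral_le: "?I + ennreal (v/2) * emeasure (K x) E \<le> ennreal v" .
  have "ennreal p \<le> emeasure (K x) E"
    using increase_prob[OF x] unfolding E_def by (simp add: measure_pmf.emeasure_eq_measure)
  then have "ennreal (v/2 * p) \<le> ennreal (v/2) * emeasure (K x) E"
    using v p_pos by (simp add: ennreal_mult' mult_left_mono del: times_divide_eq_left)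
  then have "?I + ennreal (v/2 * p) \<le> ennreal v"
    using integral_le by (meson add_left_mono order.trans)
  then have "?I \<le> ennreal v - ennreal (v/2 * p)"
    by (simp add: ennreal_le_minus_iff)
  also have "ennreal v - ennreal (v/2 * p) = ennreal ((1 - p/2) * v)"
    using v p_pos by (simp add: ennreal_minus algebra_simps)
  finally show ?thesis unfolding v_def .
qed

lemma path_lyap_le: "(\<integral>\<^sup>+xs. lyap xs \<partial>path_pmf I K t) \<le> ennreal ((1 - p/2) ^ t)"
proof (induction t)
  case 0
  have "(\<integral>\<^sup>+xs. lyap xs \<partial>path_pmf I K 0) \<le> (\<integral>\<^sup>+xs. 1 \<partial>path_pmf I K 0)"
    by (rule nn_integral_mono) (simp add: lyap_def power_le_one)
  then show ?case by (simp add: measure_pmf.emeasure_space_1)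
next
  case (Suc t)
  have r: "0 \<le> 1 - p/2" using p_le_1 by simp
  have step: "(\<integral>\<^sup>+y. lyap (xs @ [y]) \<partial>K (last xs)) \<le> ennreal (1 - p/2) * lyap xs"
    if xs: "xs \<in> set_pmf (path_pmf I K t)" for xs
  proof (cases "\<forall>x\<in>set xs. x \<notin> T")
    case True
    have "xs \<noteq> []" "last xs \<in> S" using set_path_pmf[OF init_subset step_subset xs] by auto
    then have "last xs \<notin> T" using True by simp
    have "(\<integral>\<^sup>+y. lyap (xs @ [y]) \<partial>K (last xs)) \<le> (\<integral>\<^sup>+y. ennreal ((1/2) ^ height y) \<partial>K (last xs))"
      by (rule nn_integral_mono) (simp add: lyap_def)
    also have "\<dots> \<le> ennreal ((1 - p/2) * (1/2) ^ height (last xs))"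
      using kernel_lyap_le \<open>last xs \<in> S\<close> \<open>last xs \<notin> T\<close> .
    also have "\<dots> = ennreal (1 - p/2) * lyap xs"
      using True r by (simp add: lyap_def ennreal_mult)
    finally show ?thesis .
  next
    case False
    then have "lyap (xs @ [y]) = 0" for y by (auto simp: lyap_def)
    then show ?thesis by simp
  qed
  have "(\<integral>\<^sup>+xs. lyap xs \<partial>path_pmf I K (Suc t))
      = (\<integral>\<^sup>+xs. \<integral>\<^sup>+y. lyap (xs @ [y]) \<partial>K (last xs) \<partial>path_pmf I K t)"
    by simp
  also have "\<dots> \<le> (\<integral>\<^sup>+xs. ennreal (1 - p/2) * lyap xs \<partial>path_pmf I K t)"
    by (rule nn_integral_mono_AE) (simp add: AE_measure_pmf_iff step)
  also have "\<dots> = ennreal (1 - p/2) * (\<integral>\<^sup>+xs. lyap xs \<partial>path_pmf I K t)"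
    by (rule nn_integral_cmult) simp
  also have "\<dots> \<le> ennreal (1 - p/2) * ennreal ((1 - p/2) ^ t)"
    by (rule mult_left_mono[OF Suc.IH]) simp
  also have "\<dots> = ennreal ((1 - p/2) ^ Suc t)"
    using r by (simp add: ennreal_mult)
  finally show ?case .
qed

lemma avoid_prob_le:
  "measure_pmf.prob (path_pmf I K t) {xs. \<forall>x\<in>set xs. x \<notin> T} \<le> 2 ^ (2*M) * (1 - p/2) ^ t"
proof -
  let ?A = "{xs. \<forall>x\<in>set xs. x \<notin> T}"
  have indicator_le: "indicator ?A xs \<le> ennreal (2 ^ (2*M)) * lyap xs"
    if xs: "xs \<in> set_pmf (path_pmf I K t)" for xs
  proof -
    have "last xs \<in> S" using set_path_pmf[OF init_subset step_subset xs] by auto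
    then have "height (last xs) \<le> 2*M"
      using potential_bounded unfolding height_def by fastforce
    then have "(1/2::real) ^ (2*M) \<le> (1/2) ^ height (last xs)"
      by (rule power_decreasing) auto
    then have "1 \<le> (2::real) ^ (2*M) * (1/2) ^ height (last xs)"
      by (simp add: power_one_over field_simps)
    then show ?thesis
      by (auto simp: lyap_def indicator_def ennreal_mult[symmetric] ennreal_leI
          simp del: ennreal_numeral ennreal_power)
  qed
  have "emeasure (path_pmf I K t) ?A = (\<integral>\<^sup>+xs. indicator ?A xs \<partial>path_pmf I K t)"
    by simp
  also have "\<dots> \<le> (\<integral>\<^sup>+xs. ennreal (2 ^ (2*M)) * lyap xs \<partial>path_pmf I K t)"
    by (rule nn_integral_mono_AE) (simp add: AE_measure_pmf_iff indicator_le)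
  also have "\<dots> = ennreal (2 ^ (2*M)) * (\<integral>\<^sup>+xs. lyap xs \<partial>path_pmf I K t)"
    by (rule nn_integral_cmult) simp
  also have "\<dots> \<le> ennreal (2 ^ (2*M)) * ennreal ((1 - p/2) ^ t)"
    by (rule mult_left_mono[OF path_lyap_le]) simp
  also have "\<dots> = ennreal (2 ^ (2*M) * (1 - p/2) ^ t)"
    using p_le_1 by (simp add: ennreal_mult)
  finally show ?thesis
    using p_le_1 by (simp add: measure_pmf.emeasure_eq_measure)
qed

lemma hitting_prob_tendsto_1:
  "(\<lambda>t. measure_pmf.prob (path_pmf I K t) {xs. \<exists>x\<in>set xs. x \<in> T}) \<longlonglongrightarrow> 1"
proof (rule tendsto_sandwich)
  let ?P = "\<lambda>t. measure_pmf.prob (path_pmf I K t) {xs. \<exists>x\<in>set xs. x \<in> T}"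
  show "eventually (\<lambda>t. ?P t \<le> 1) sequentially"
    by simp
  have "?P t = 1 - measure_pmf.prob (path_pmf I K t) {xs. \<forall>x\<in>set xs. x \<notin> T}" for t
  proof -
    have "{xs. \<exists>x\<in>set xs. x \<in> T} = space (measure_pmf (path_pmf I K t)) - {xs. \<forall>x\<in>set xs. x \<notin> T}"
      by auto
    then show ?thesis by (simp only:) (rule measure_pmf.prob_compl, simp)
  qed
  then show "eventually (\<lambda>t. 1 - 2 ^ (2*M) * (1 - p/2) ^ t \<le> ?P t) sequentially"
    using avoid_prob_le by simp
  have "(\<lambda>t. 1 - 2 ^ (2*M) * (1 - p/2) ^ t) \<longlonglongrightarrow> 1 - 2 ^ (2*M) * 0"
    using p_pos p_le_1 by (intro tendsto_intros LIMSEQ_power_zero) simp_all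
  then show "(\<lambda>t. 1 - 2 ^ (2*M) * (1 - p/2) ^ t) \<longlonglongrightarrow> (1::real)" by simp
qed (simp add: tendsto_const)

lemma SUP_hitting_prob_eq_1:
  "(SUP t. measure_pmf.prob (path_pmf I K t) {xs. \<exists>x\<in>set xs. x \<in> T}) = 1"
proof (rule antisym)
  let ?P = "\<lambda>t. measure_pmf.prob (path_pmf I K t) {xs. \<exists>x\<in>set xs. x \<in> T}"
  have bdd: "bdd_above (range ?P)"
    by (rule bdd_aboveI[of _ 1]) auto
  show "(SUP t. ?P t) \<le> 1"
    by (rule cSUP_least) auto
  show "1 \<le> (SUP t. ?P t)"
    by (rule LIMSEQ_le_const2[OF hitting_prob_tendsto_1]) (auto intro: cSUP_upper[OF _ bdd])
qed

end

abbreviation window :: "nat \<Rightarrow> int set" where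
  "window w \<equiv> {-int w..int w}"

definition ring_shift :: "nat \<Rightarrow> nat \<Rightarrow> int \<Rightarrow> nat" where
  "ring_shift n k d = nat ((int k + d) mod int n)"

lemma ring_shift_less: "0 < n \<Longrightarrow> ring_shift n k d < n"
  unfolding ring_shift_def by (simp add: nat_less_iff)

lemma ring_shift_zero: "k < n \<Longrightarrow> ring_shift n k 0 = k"
  unfolding ring_shift_def by simp

lemma ring_shift_ring_shift_neg:
  assumes "k < n" shows "ring_shift n (ring_shift n k d) (-d) = k"
proof -
  have "(int (nat ((int k + d) mod int n)) - d) mod int n = ((int k + d) mod int n - d) mod int n"
    using assms by simp
  also have "\<dots> = int k" using assms by (simp add: mod_diff_left_eq)
  finally show ?thesis unfolding ring_shift_def by simp
qed

lemma inj_on_ring_shift: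
  assumes "2*w + 1 \<le> n" shows "inj_on (ring_shift n k) (window w)"
proof
  fix d d' assume d: "d \<in> window w" "d' \<in> window w" and eq: "ring_shift n k d = ring_shift n k d'"
  have "(int k + d) mod int n = (int k + d') mod int n"
    using eq assms unfolding ring_shift_def by (simp add: eq_nat_nat_iff)
  then have "int n dvd d - d'" by (simp add: mod_eq_dvd_iff)
  moreover have "\<bar>d - d'\<bar> < int n" using d assms by auto
  ultimately show "d = d'" using dvd_imp_le_int[of "d - d'" "int n"] by fastforce
qed

lemma card_ring_shift_hits_le_1:
  assumes "2*w + 1 \<le> n" shows "card {d \<in> window w. ring_shift n k d = m} \<le> 1"
proof -
  have "{d \<in> window w. ring_shift n k d = m} = ring_shift n k -` {m} \<inter> window w" by auto
  then show ?thesis using card_vimage_inj_on_le[OF inj_on_ring_shift[OF assms], of "{m}"] by simp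
qed

lemma card_ring_shift_hits_self:
  assumes "2*w + 1 \<le> n" "k < n" shows "card {d \<in> window w. ring_shift n k d = k} = 1"
proof -
  have "{d \<in> window w. ring_shift n k d = k} = {0}"
    using inj_on_ring_shift[OF assms(1), of k] ring_shift_zero[OF assms(2)]
    by (auto dest: inj_onD[where y=0])
  then show ?thesis by simp
qed

definition window_pairing :: "nat \<Rightarrow> nat \<Rightarrow> (nat \<Rightarrow> int) \<Rightarrow> (nat \<Rightarrow> int) \<Rightarrow> int" where
  "window_pairing w n f g = (\<Sum>k<n. f k * (\<Sum>d\<in>window w. g (ring_shift n k d)))"

lemma window_pairing_add_left:
  "window_pairing w n (\<lambda>k. f k + g k) h = window_pairing w n f h + window_pairing w n g h"
  unfolding window_pairing_def by (simp add: algebra_simps sum.distrib)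

lemma window_pairing_add_right:
  "window_pairing w n h (\<lambda>k. f k + g k) = window_pairing w n h f + window_pairing w n h g"
  unfolding window_pairing_def by (simp add: algebra_simps sum.distrib)

lemma window_pairing_swap_sums:
  "window_pairing w n f g = (\<Sum>d\<in>window w. \<Sum>k<n. f k * g (ring_shift n k d))"
  unfolding window_pairing_def by (simp add: sum_distrib_left sum.swap[of _ "{..<n}"])

lemma window_pairing_commute:
  assumes "0 < n" shows "window_pairing w n f g = window_pairing w n g f"
proof -
  have shift: "(\<Sum>k<n. f k * g (ring_shift n k d)) = (\<Sum>m<n. g m * f (ring_shift n m (-d)))" for d
    by (rule sum.reindex_bij_witness[where i="\<lambda>m. ring_shift n m (-d)" and j="\<lambda>k. ring_shift n k d"])
       (use assms in \<open>auto simp: ring_shift_less ring_shift_ring_shift_neg mult.commute\<close>,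
        metis minus_minus ring_shift_ring_shift_neg)
  have "window_pairing w n f g = (\<Sum>d\<in>window w. \<Sum>m<n. g m * f (ring_shift n m (-d)))"
    unfolding window_pairing_swap_sums shift ..
  also have "\<dots> = (\<Sum>d\<in>window w. \<Sum>m<n. g m * f (ring_shift n m d))"
    by (rule sum.reindex_bij_witness[where i=uminus and j=uminus]) auto
  finally show ?thesis unfolding window_pairing_swap_sums .
qed

lemma window_pairing_point_left:
  assumes "m < n"
  shows "window_pairing w n (\<lambda>k. if k = m then a else 0) g = a * (\<Sum>d\<in>window w. g (ring_shift n m d))"
proof -
  have "window_pairing w n (\<lambda>k. if k = m then a else 0) g
      = (\<Sum>k<n. if k = m then a * (\<Sum>d\<in>window w. g (ring_shift n k d)) else 0)"
    unfolding window_pairing_def by (rule sum.cong) auto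
  then show ?thesis using assms by simp
qed

lemma sum_window_point:
  "(\<Sum>d\<in>window w. (\<lambda>k. if k = m then a else 0) (ring_shift n k d)) = a * int (card {d \<in> window w. ring_shift n k d = m})"
  by (simp add: sum.If_cases Int_def)

definition spin :: "bool list \<Rightarrow> nat \<Rightarrow> int" where
  "spin c k = sgn_lab (c ! k)"

lemma xbias_eq_sum_spin: "xbias w c k = (\<Sum>d\<in>window w. spin c (ring_shift (length c) k d))"
  unfolding xbias_def spin_def ring_shift_def ..

lemma odd_xbias: "odd (xbias w c k)"
proof -
  have "xbias w c k = (\<Sum>d\<in>window w. 1 - 2 * (if c ! ring_shift (length c) k d then 0 else 1))"
    unfolding xbias_eq_sum_spin spin_def sgn_lab_def by (rule sum.cong) auto
  also have "\<dots> = 2 * int w + 1 - 2 * (\<Sum>d\<in>window w. if c ! ring_shift (length c) k d then 0 else 1)"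
    by (simp add: sum_subtractf sum_distrib_left)
  finally show ?thesis by simp
qed

definition energy :: "nat \<Rightarrow> bool list \<Rightarrow> int" where
  "energy w c = window_pairing w (length c) (spin c) (spin c)"

lemma abs_energy_le: "\<bar>energy w c\<bar> \<le> int (length c * (2*w + 1))"
proof -
  have bound: "\<bar>spin c k * (\<Sum>d\<in>window w. spin c (ring_shift (length c) k d))\<bar> \<le> 2 * int w + 1" for k
  proof -
    have "\<bar>\<Sum>d\<in>window w. spin c (ring_shift (length c) k d)\<bar> \<le> (\<Sum>d\<in>window w. \<bar>spin c (ring_shift (length c) k d)\<bar>)"
      by (rule sum_abs)
    also have "\<dots> = (\<Sum>d\<in>window w. 1)" by (rule sum.cong) (simp_all add: spin_def sgn_lab_def)
    finally show ?thesis by (simp add: spin_def sgn_lab_def abs_mult)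
  qed
  have "\<bar>energy w c\<bar> \<le> (\<Sum>k<length c. \<bar>spin c k * (\<Sum>d\<in>window w. spin c (ring_shift (length c) k d))\<bar>)"
    unfolding energy_def window_pairing_def by (rule sum_abs)
  also have "\<dots> \<le> (\<Sum>k<length c. 2 * int w + 1)"
    by (rule sum_mono) (rule bound)
  finally show ?thesis by (simp add: algebra_simps)
qed

lemma length_swap_nodes: "length (swap_nodes c i j) = length c"
  unfolding swap_nodes_def by simp

lemma energy_swap_gt:
  assumes n: "2*w + 1 \<le> length c"
    and i: "i < length c" "c ! i" "unhappy w c i"
    and j: "j < length c" "\<not> c ! j" "unhappy w c j"
  shows "energy w c < energy w (swap_nodes c i j)"
proof -
  let ?n = "length c" and ?B = "window_pairing w (length c)"
  let ?hits = "\<lambda>k m. int (card {d \<in> window w. ring_shift ?n k d = m})"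
  define \<delta> where "\<delta> = (\<lambda>k. (if k = i then -2 else 0) + (if k = j then 2 else (0::int)))"
  have "i \<noteq> j" "0 < ?n" using i j by auto
  have spin_swap: "spin (swap_nodes c i j) = (\<lambda>k. spin c k + \<delta> k)"
    using i j \<open>i \<noteq> j\<close> by (auto simp: swap_nodes_def spin_def sgn_lab_def \<delta>_def nth_list_update)
  have pairing_\<delta>: "?B \<delta> g = 2 * (\<Sum>d\<in>window w. g (ring_shift ?n j d)) - 2 * (\<Sum>d\<in>window w. g (ring_shift ?n i d))" for g
    using i j unfolding \<delta>_def window_pairing_add_left by (simp add: window_pairing_point_left)
  have sum_\<delta>: "(\<Sum>d\<in>window w. \<delta> (ring_shift ?n k d)) = 2 * ?hits k j - 2 * ?hits k i" for k
    unfolding \<delta>_def sum.distrib sum_window_point by simp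
  have "?B \<delta> \<delta> = 8 - 4 * ?hits i j - 4 * ?hits j i"
    using card_ring_shift_hits_self[OF n] i j unfolding pairing_\<delta> sum_\<delta> by simp
  txt \<open>Since \<open>2w+1 \<le> n\<close>, a window contains its centre once and any other node at most once.\<close>
  moreover have "?hits i j \<le> 1" "?hits j i \<le> 1"
    using card_ring_shift_hits_le_1[OF n] by (simp_all only: of_nat_le_1_iff)
  ultimately have "0 \<le> ?B \<delta> \<delta>" by linarith
  txt \<open>The window has odd size, so no bias vanishes.\<close>
  have "xbias w c i \<noteq> 0" "xbias w c j \<noteq> 0"
    using odd_xbias[of w c] by (metis even_zero)+
  then have "xbias w c i < 0" "0 < xbias w c j"
    using i j unfolding unhappy_def happy_def by auto
  then have "0 < ?B \<delta> (spin c)"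
    unfolding pairing_\<delta> xbias_eq_sum_spin[symmetric] by simp
  have "energy w (swap_nodes c i j) = energy w c + 2 * ?B \<delta> (spin c) + ?B \<delta> \<delta>"
    using window_pairing_commute[of ?n w "spin c" \<delta>] \<open>0 < ?n\<close>
    unfolding energy_def length_swap_nodes spin_swap window_pairing_add_left window_pairing_add_right
    by simp
  with \<open>0 \<le> ?B \<delta> \<delta>\<close> \<open>0 < ?B \<delta> (spin c)\<close> show ?thesis by simp
qed

definition exchange :: "nat \<Rightarrow> bool list \<Rightarrow> nat \<Rightarrow> nat \<Rightarrow> bool list" where
  "exchange w c i j =
     (if c ! i \<noteq> c ! j \<and> unhappy w c i \<and> unhappy w c j then swap_nodes c i j else c)"

lemma step_eq_map_pmf:
  "2 \<le> length c \<Longrightarrow>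
   step w c = map_pmf (\<lambda>(i, j). exchange w c i j) (pmf_of_set {(i, j). i < j \<and> j < length c})"
  unfolding step_def exchange_def by simp

lemma finite_index_pairs: "finite {(i, j). i < j \<and> j < (n::nat)}"
  by (rule finite_subset[of _ "{..<n} \<times> {..<n}"]) auto

lemma card_index_pairs_le: "card {(i, j). i < j \<and> j < n} \<le> n^2"
proof -
  have "card {(i, j). i < j \<and> j < n} \<le> card ({..<n} \<times> {..<n})"
    by (rule card_mono) auto
  then show ?thesis by (simp add: power2_eq_square)
qed

lemma set_pmf_step:
  assumes "2 \<le> length c"
  shows "set_pmf (step w c) = (\<lambda>(i, j). exchange w c i j) ` {(i, j). i < j \<and> j < length c}"
proof -
  have "(0, 1) \<in> {(i, j). i < j \<and> j < length c}" using assms by simp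
  then have "{(i, j). i < j \<and> j < length c} \<noteq> {}" by blast
  then show ?thesis unfolding step_eq_map_pmf[OF assms] by (simp add: finite_index_pairs)
qed

lemma length_step: "c' \<in> set_pmf (step w c) \<Longrightarrow> length c' = length c"
  by (cases "2 \<le> length c")
     (auto simp: set_pmf_step exchange_def swap_nodes_def step_def)

lemma energy_exchange_gt:
  assumes n: "2*w + 1 \<le> length c" and ij: "i < length c" "j < length c"
    and move: "c ! i \<noteq> c ! j" "unhappy w c i" "unhappy w c j"
  shows "energy w c < energy w (exchange w c i j)"
proof (cases "c ! i")
  case True
  then show ?thesis using energy_swap_gt[OF n] ij move by (simp add: exchange_def)
next
  case False
  have "swap_nodes c i j = swap_nodes c j i"
    using move(1) unfolding swap_nodes_def by (auto intro: list_update_swap)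
  with False show ?thesis using energy_swap_gt[OF n] ij move by (simp add: exchange_def)
qed

lemma energy_step_mono:
  assumes n: "2*w + 1 \<le> length c" and c': "c' \<in> set_pmf (step w c)"
  shows "energy w c \<le> energy w c'"
proof (cases "2 \<le> length c")
  case True
  then obtain i j where ij: "i < j" "j < length c" and c'_eq: "c' = exchange w c i j"
    using c' by (auto simp: set_pmf_step)
  show ?thesis
  proof (cases "c ! i \<noteq> c ! j \<and> unhappy w c i \<and> unhappy w c j")
    case True
    then show ?thesis
      unfolding c'_eq using energy_exchange_gt[OF n, of i j] ij by simp
  next
    case False
    then have "c' = c" unfolding c'_eq exchange_def by (rule if_not_P)
    then show ?thesis by simp
  qed
next
  case False
  then show ?thesis using c' by (simp add: step_def)
qed

lemma energy_step_increase_prob: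
  assumes n: "2*w + 1 \<le> length c" and "\<not> frozen w c"
  shows "1 / (length c)^2 \<le> measure_pmf.prob (step w c) {c'. energy w c < energy w c'}"
proof -
  let ?P = "{(i, j). i < j \<and> j < length c}"
  obtain i j where i: "i < length c" "c ! i" "unhappy w c i"
    and j: "j < length c" "\<not> c ! j" "unhappy w c j"
    using assms(2) unfolding frozen_def by blast
  define p where "p = (min i j, max i j)"
  have "i \<noteq> j" using i j by auto
  then have "p \<in> ?P" "2 \<le> length c" using i j by (auto simp: p_def)
  have "energy w c < energy w (exchange w c (min i j) (max i j))"
    using energy_exchange_gt[OF n] i j by (simp add: min_def max_def)
  then have "{p} \<subseteq> (\<lambda>(i, j). exchange w c i j) -` {c'. energy w c < energy w c'}"
    by (simp add: p_def)
  then have "measure_pmf.prob (pmf_of_set ?P) {p}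
      \<le> measure_pmf.prob (step w c) {c'. energy w c < energy w c'}"
    unfolding step_eq_map_pmf[OF \<open>2 \<le> length c\<close>] by (simp add: measure_pmf.finite_measure_mono)
  moreover have "measure_pmf.prob (pmf_of_set ?P) {p} = 1 / card ?P"
    using \<open>p \<in> ?P\<close> finite_index_pairs by (subst measure_pmf_of_set) auto
  moreover have "1 / (length c)^2 \<le> 1 / card ?P"
  proof (rule divide_left_mono)
    have "0 < card ?P" using \<open>p \<in> ?P\<close> finite_index_pairs card_gt_0_iff by blast
    then show "0 < real (length c ^ 2) * real (card ?P)" using i by (intro mult_pos_pos) auto
  qed (use card_index_pairs_le[of "length c"] in simp_all)
  ultimately show ?thesis by linarith
qed

lemma traj_eq_path_pmf: "traj w n t = path_pmf (init_cfg n) (step w) t"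
  by (induction t) simp_all

lemma set_pmf_init_cfg: "set_pmf (init_cfg n) = {c. length c = n}"
proof -
  have "finite {c :: bool list. length c = n}"
    using finite_lists_length_eq[of "UNIV :: bool set" n] by simp
  moreover have "replicate n True \<in> {c. length c = n}" by simp
  ultimately show ?thesis unfolding init_cfg_def by (metis empty_iff set_pmf_of_set)
qed

lemma segregation_potential_drift:
  assumes "2*w + 1 \<le> n"
  shows "potential_drift (init_cfg n) (step w) {c. length c = n} {c. frozen w c}
           (energy w) (n * (2*w + 1)) (1 / real n ^ 2)"
proof
  show "set_pmf (init_cfg n) \<subseteq> {c. length c = n}" by (simp add: set_pmf_init_cfg)
  show "set_pmf (step w c) \<subseteq> {c. length c = n}" if "c \<in> {c. length c = n}" for c
    using that length_step by blast
  show "\<bar>energy w c\<bar> \<le> int (n * (2*w + 1))" if "c \<in> {c. length c = n}" for c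
    using that abs_energy_le by auto
  show "energy w c \<le> energy w c'" if "c \<in> {c. length c = n}" "c' \<in> set_pmf (step w c)" for c c'
    using that assms energy_step_mono by auto
  show "1 / real n ^ 2 \<le> measure_pmf.prob (step w c) {c'. energy w c < energy w c'}"
    if "c \<in> {c. length c = n}" "c \<notin> {c. frozen w c}" for c
    using that assms energy_step_increase_prob by auto
  show "0 < 1 / real n ^ 2" "1 / real n ^ 2 \<le> 1" using assms by auto
qed

theorem proposition1:
  fixes w :: nat
  shows "(\<lambda>n. reach_frozen_prob w n) \<longlonglongrightarrow> 1"
proof (rule tendsto_eventually)
  have "reach_frozen_prob w n = 1" if "2*w + 1 \<le> n" for n
  proof -
    interpret potential_drift "init_cfg n" "step w" "{c. length c = n}" "{c. frozen w c}"
      "energy w" "n * (2*w + 1)" "1 / real n ^ 2"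
      using segregation_potential_drift[OF that] .
    show ?thesis
      using SUP_hitting_prob_eq_1
      unfolding reach_frozen_prob_def reach_within_def traj_eq_path_pmf by simp
  qed
  then show "eventually (\<lambda>n. reach_frozen_prob w n = 1) sequentially"
    by (auto simp: eventually_sequentially)
qed

end
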